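(* Let $\Gamma$ be a connected finite simple graph on $N\ge3$ vertices with minimum degree $d=2$ and $\varepsilon=\frac12$. Then there exist two adjacent vertices $u\sim v$ with $\deg u=\deg v=2$.
   Context: For a finite simple graph $\Gamma=(V,E)$ without isolated vertices, $\deg v$ is the number of neighbours of $v$ and $\mathcal N(v)=\{w\in V: w\sim v\}$. The normalized Laplacian acts on functions $f:V\to\mathbb R$ by $\Delta f(v)=f(v)-\frac{1}{\deg v}\sum_{w\sim v}f(w)$; its eigenvalues are $0=\lambda_1\le\lambda_2\le\dots\le\lambda_N$, and $\varepsilon:=\min_i|1-\lambda_i|$. $d$ denotes the minimum vertex degree. *)

theory Defs
  imports Main "HOL-Analysis.Analysis"
begin

definition simple_graph :: "'a set \<Rightarrow> ('a \<Rightarrow> 'a \<Rightarrow> bool) \<Rightarrow> bool" where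
  "simple_graph V E \<longleftrightarrow> finite V \<and> (\<forall>u v. E u v \<longrightarrow> u \<in> V \<and> v \<in> V)
     \<and> (\<forall>u v. E u v \<longrightarrow> E v u) \<and> (\<forall>v. \<not> E v v)"

definition nbhd :: "'a set \<Rightarrow> ('a \<Rightarrow> 'a \<Rightarrow> bool) \<Rightarrow> 'a \<Rightarrow> 'a set" where
  "nbhd V E v = {w \<in> V. E v w}"

definition deg :: "'a set \<Rightarrow> ('a \<Rightarrow> 'a \<Rightarrow> bool) \<Rightarrow> 'a \<Rightarrow> nat" where
  "deg V E v = card (nbhd V E v)"

definition connected_graph :: "'a set \<Rightarrow> ('a \<Rightarrow> 'a \<Rightarrow> bool) \<Rightarrow> bool" where
  "connected_graph V E \<longleftrightarrow> V \<noteq> {} \<and> (\<forall>u\<in>V. \<forall>v\<in>V. E\<^sup>*\<^sup>* u v)"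

definition min_degree :: "'a set \<Rightarrow> ('a \<Rightarrow> 'a \<Rightarrow> bool) \<Rightarrow> nat" where
  "min_degree V E = Min (deg V E ` V)"

definition norm_laplacian :: "'a set \<Rightarrow> ('a \<Rightarrow> 'a \<Rightarrow> bool) \<Rightarrow> ('a \<Rightarrow> real) \<Rightarrow> 'a \<Rightarrow> real" where
  "norm_laplacian V E f v = f v - (\<Sum>w\<in>nbhd V E v. f w) / real (deg V E v)"

definition laplacian_eigenvalues :: "'a set \<Rightarrow> ('a \<Rightarrow> 'a \<Rightarrow> bool) \<Rightarrow> real set" where
  "laplacian_eigenvalues V E = {mu. \<exists>f. (\<exists>v\<in>V. f v \<noteq> 0) \<and>
      (\<forall>v\<in>V. norm_laplacian V E f v = mu * f v)}"

definition eps_gap :: "'a set \<Rightarrow> ('a \<Rightarrow> 'a \<Rightarrow> bool) \<Rightarrow> real" where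
  "eps_gap V E = Min ((\<lambda>mu. \<bar>1 - mu\<bar>) ` laplacian_eigenvalues V E)"

end

theory Submission
  imports Defs
begin

(* Let P f x be the average of f over the neighbours of x, so that Delta = I - P, and note that P is
   self-adjoint for <f, g> = sum_x deg x * f x * g x. If the form Q f = <P f, P f> - <f, f> / 4 of
   P^2 - 1/4 takes a negative value, a minimiser of Q on the unit sphere is an eigenfunction of P^2
   with eigenvalue s^2 < 1/4, which yields an eigenvalue 1 - s or 1 + s of Delta. So epsilon = 1/2
   forces Q >= 0.
   Suppose no two vertices of degree 2 are adjacent and pick v of degree 2 with neighbours a, b, of
   degree at least 3. A second vertex w of degree 2 sharing a neighbour with v gives
   Q (delta_v - delta_w) < 0. Otherwise Q f <= 0 for f = delta_v when 1/deg a + 1/deg b <= 1/2, and for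
   f = delta_a - delta_b when deg a = 3 and deg b <= 5 (the only other case, up to symmetry). There
   P (P f) differs from f / 4 at some vertex, so f is not a critical point of Q and a small
   perturbation of f makes Q negative. *)

lemma linear_coeff_zero_if_quadratic_nonneg:
  fixes b q :: real
  assumes "\<And>t. 0 \<le> 2 * t * b + t\<^sup>2 * q"
  shows "b = 0"
proof (rule ccontr)
  assume b: "b \<noteq> 0"
  define c where "c = \<bar>q\<bar> + 1"
  have c: "c > 0" "q < 2 * c" unfolding c_def by auto
  define t where "t = - b / c"
  have "2 * t * b + t\<^sup>2 * q = b\<^sup>2 * (q - 2 * c) / c\<^sup>2"
    unfolding t_def using c by (simp add: field_simps power2_eq_square)
  also have "\<dots> < 0" using b c by (intro divide_neg_pos mult_pos_neg) auto
  finally show False using assms[of t] by simp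
qed

lemma inverse_sum_gt_half_cases:
  fixes m n :: nat
  assumes "3 \<le> m" "3 \<le> n" and gt: "1 / real m + 1 / real n > 1 / 2"
  shows "(m = 3 \<and> n \<le> 5) \<or> (n = 3 \<and> m \<le> 5)"
proof (rule ccontr)
  have inv_le: "1 / real k \<le> 1 / real l" if "0 < l" "l \<le> k" for k l :: nat
    using that by (simp add: frac_le)
  assume "\<not> ?thesis"
  then consider "4 \<le> m" "4 \<le> n" | "6 \<le> m" | "6 \<le> n" using assms(1,2) by linarith
  then have "1 / real m + 1 / real n \<le> 1 / 2"
  proof cases
    case 1
    then have "1 / real m \<le> 1 / 4" "1 / real n \<le> 1 / 4" using inv_le[of 4] by auto
    then show ?thesis by linarith
  next
    case 2
    then have "1 / real m \<le> 1 / 6" "1 / real n \<le> 1 / 3" using inv_le[of 6] inv_le[of 3] assms by auto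
    then show ?thesis by linarith
  next
    case 3
    then have "1 / real m \<le> 1 / 3" "1 / real n \<le> 1 / 6" using inv_le[of 6] inv_le[of 3] assms by auto
    then show ?thesis by linarith
  qed
  then show False using gt by simp
qed

lemma sum_indicator_mult_subset:
  fixes g :: "'a \<Rightarrow> real"
  assumes "finite B" "A \<subseteq> B"
  shows "(\<Sum>y\<in>B. indicator A y * g y) = sum g A"
  using assms by (intro sum.mono_neutral_cong_right) auto

lemma compact_box_functions:
  fixes V :: "'a set"
  shows "compact {g::'a \<Rightarrow> real. \<forall>x. g x \<in> (if x \<in> V then {-1..1} else {0})}"
proof -
  have "compactin (product_topology (\<lambda>i. euclidean) UNIV)
          (PiE UNIV (\<lambda>x::'a. if x \<in> V then {-1..(1::real)} else {0}))"
    by (subst compactin_PiE) auto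
  moreover have "PiE UNIV (\<lambda>x::'a. if x \<in> V then {-1..(1::real)} else {0})
      = {g::'a \<Rightarrow> real. \<forall>x. g x \<in> (if x \<in> V then {-1..1} else {0})}"
    by (simp add: PiE_UNIV_domain Pi_def)
  ultimately show ?thesis
    by (simp add: euclidean_product_topology compactin_euclidean_iff)
qed

lemma continuous_on_coordinate [continuous_intros]:
  "continuous_on S (\<lambda>g::'a \<Rightarrow> real. g x)"
  by (rule continuous_on_subset[OF continuous_on_product_coordinates]) simp

lemma min_degree_le: "finite V \<Longrightarrow> y \<in> V \<Longrightarrow> min_degree V E \<le> deg V E y"
  unfolding min_degree_def by simp

lemma min_degree_attained: "finite V \<Longrightarrow> V \<noteq> {} \<Longrightarrow> \<exists>v\<in>V. deg V E v = min_degree V E"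
  unfolding min_degree_def using Min_in[of "deg V E ` V"] by fastforce

subsection \<open>The random walk operator\<close>

locale no_isolated_graph =
  fixes V :: "'a set" and E :: "'a \<Rightarrow> 'a \<Rightarrow> bool"
  assumes simple: "simple_graph V E"
    and deg_pos: "x \<in> V \<Longrightarrow> 0 < deg V E x"
begin

definition dg :: "'a \<Rightarrow> real" where
  "dg x = real (deg V E x)"

definition walk :: "('a \<Rightarrow> real) \<Rightarrow> 'a \<Rightarrow> real" where
  "walk f x = (\<Sum>y\<in>nbhd V E x. f y) / dg x"

definition wdot :: "('a \<Rightarrow> real) \<Rightarrow> ('a \<Rightarrow> real) \<Rightarrow> real" where
  "wdot f g = (\<Sum>x\<in>V. dg x * f x * g x)"

(* <(P^2 - c) f, g> for P = walk, which is self-adjoint for wdot *)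
definition walk_form :: "real \<Rightarrow> ('a \<Rightarrow> real) \<Rightarrow> ('a \<Rightarrow> real) \<Rightarrow> real" where
  "walk_form c f g = wdot (walk f) (walk g) - c * wdot f g"

lemma finite_V: "finite V"
  using simple unfolding simple_graph_def by auto

lemma edge_in_V: "E u v \<Longrightarrow> u \<in> V \<and> v \<in> V"
  using simple unfolding simple_graph_def by auto

lemma edge_sym: "E u v \<Longrightarrow> E v u"
  using simple unfolding simple_graph_def by auto

lemma nbhd_subset: "nbhd V E x \<subseteq> V"
  unfolding nbhd_def by auto

lemma finite_nbhd: "finite (nbhd V E x)"
  using finite_V nbhd_subset finite_subset by blast

lemma mem_nbhd_iff: "y \<in> nbhd V E x \<longleftrightarrow> E x y"
  unfolding nbhd_def using edge_in_V by auto

lemma card_nbhd: "real (card (nbhd V E x)) = dg x"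
  unfolding dg_def deg_def by simp

lemma dg_ge_1: "x \<in> V \<Longrightarrow> 1 \<le> dg x"
  using deg_pos unfolding dg_def by (simp add: Suc_leI)

lemma dg_pos: "x \<in> V \<Longrightarrow> 0 < dg x"
  using dg_ge_1 by fastforce

lemma dg_nonneg: "0 \<le> dg x"
  unfolding dg_def by simp

lemma sum_over_nbhd:
  "(\<Sum>y\<in>nbhd V E x. g y) = (\<Sum>y\<in>V. if E x y then g y else 0)"
  unfolding nbhd_def using finite_V by (simp add: sum.inter_filter)

lemma wdot_comm: "wdot f g = wdot g f"
  unfolding wdot_def by (simp add: mult.commute mult.left_commute)

lemma wdot_cong:
  "(\<And>y. y \<in> V \<Longrightarrow> f y = f' y) \<Longrightarrow> (\<And>y. y \<in> V \<Longrightarrow> g y = g' y) \<Longrightarrow> wdot f g = wdot f' g'"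
  unfolding wdot_def by (intro sum.cong) auto

lemma wdot_scaled_left: "wdot (\<lambda>y. a * f y) g = a * wdot f g"
  unfolding wdot_def by (simp add: sum_distrib_left algebra_simps)

lemma wdot_scaled_right: "wdot f (\<lambda>y. b * g y) = b * wdot f g"
  unfolding wdot_def by (simp add: sum_distrib_left algebra_simps)

lemma wdot_sum_left: "wdot (\<lambda>y. \<Sum>i\<in>S. a i * f i y) g = (\<Sum>i\<in>S. a i * wdot (f i) g)"
  unfolding wdot_def by (simp add: sum_distrib_left sum_distrib_right algebra_simps sum.swap[of _ V])

lemma wdot_indicator: "x \<in> V \<Longrightarrow> wdot g (indicator {x}) = dg x * g x"
  unfolding wdot_def using finite_V by (simp add: indicator_def if_distrib cong: if_cong)

lemma wdot_self_nonneg: "0 \<le> wdot f f"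
  unfolding wdot_def using dg_pos by (intro sum_nonneg) (simp add: mult.assoc less_imp_le)

lemma wdot_self_eq_0_imp: "wdot f f = 0 \<Longrightarrow> x \<in> V \<Longrightarrow> f x = 0"
  using finite_V dg_pos sum_nonneg_eq_0_iff[of V "\<lambda>x. dg x * f x * f x"]
  unfolding wdot_def by (fastforce simp: mult.assoc)

lemma dg_mult_sq_le_wdot: "x \<in> V \<Longrightarrow> dg x * (f x)\<^sup>2 \<le> wdot f f"
  using member_le_sum[of x V "\<lambda>x. dg x * f x * f x"] finite_V dg_pos
  unfolding wdot_def by (simp add: power2_eq_square mult.assoc less_imp_le)

lemma walk_cong: "(\<And>y. y \<in> V \<Longrightarrow> f y = g y) \<Longrightarrow> walk f x = walk g x"
  unfolding walk_def using nbhd_subset by (metis (no_types, lifting) subsetD sum.cong)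

lemma walk_add_scaled: "walk (\<lambda>y. f y + t * g y) x = walk f x + t * walk g x"
  unfolding walk_def by (simp add: sum.distrib sum_distrib_left add_divide_distrib)

lemma walk_scaled: "walk (\<lambda>y. t * f y) x = t * walk f x"
  unfolding walk_def by (simp add: sum_distrib_left)

lemma walk_diff: "walk (\<lambda>y. f y - g y) x = walk f x - walk g x"
  unfolding walk_def by (simp add: sum_subtractf diff_divide_distrib)

lemma walk_indicator: "walk (indicator {p}) y = indicator (nbhd V E p) y / dg y"
  unfolding walk_def using finite_nbhd[of y]
  by (simp add: indicator_def mem_nbhd_iff edge_sym cong: conj_cong)
     (metis edge_sym)

lemma dg_mult_walk: "x \<in> V \<Longrightarrow> dg x * walk f x = (\<Sum>y\<in>nbhd V E x. f y)"
  using dg_pos[of x] unfolding walk_def by simp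

lemma norm_laplacian_eq: "norm_laplacian V E f x = f x - walk f x"
  unfolding norm_laplacian_def walk_def dg_def by simp

lemma walk_self_adjoint: "wdot f (walk g) = wdot (walk f) g"
proof -
  have "wdot f (walk g) = (\<Sum>x\<in>V. \<Sum>y\<in>V. if E x y then f x * g y else 0)"
    unfolding wdot_def
  proof (intro sum.cong refl)
    fix x assume "x \<in> V"
    then have "dg x * f x * walk g x = f x * (\<Sum>y\<in>nbhd V E x. g y)"
      by (simp flip: dg_mult_walk)
    then show "dg x * f x * walk g x = (\<Sum>y\<in>V. if E x y then f x * g y else 0)"
      by (simp add: sum_over_nbhd sum_distrib_left if_distrib cong: if_cong)
  qed
  also have "\<dots> = (\<Sum>y\<in>V. \<Sum>x\<in>V. if E y x then f x * g y else 0)"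
    by (subst sum.swap) (intro sum.cong refl, auto dest: edge_sym)
  also have "\<dots> = wdot (walk f) g"
    unfolding wdot_def
  proof (intro sum.cong refl)
    fix y assume "y \<in> V"
    then have "dg y * walk f y * g y = (\<Sum>x\<in>nbhd V E y. f x) * g y"
      by (simp flip: dg_mult_walk)
    then show "(\<Sum>x\<in>V. if E y x then f x * g y else 0) = dg y * walk f y * g y"
      by (auto simp: sum_over_nbhd sum_distrib_right intro!: sum.cong)
  qed
  finally show ?thesis .
qed

lemma walk_form_add_scaled:
  "walk_form c (\<lambda>y. f y + t * g y) (\<lambda>y. f y + t * g y)
     = walk_form c f f + 2 * t * walk_form c f g + t\<^sup>2 * walk_form c g g"
  unfolding walk_form_def wdot_def walk_add_scaled
  by (simp add: power2_eq_square algebra_simps sum.distrib sum_distrib_left sum_subtractf)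

lemma walk_form_indicator_right:
  "x \<in> V \<Longrightarrow> walk_form c f (indicator {x}) = dg x * (walk (walk f) x - c * f x)"
  unfolding walk_form_def walk_self_adjoint by (simp add: wdot_indicator algebra_simps)

lemma walk_form_eq_0_if_wdot_self_eq_0: "wdot f f = 0 \<Longrightarrow> walk_form c f f = 0"
proof -
  assume f: "wdot f f = 0"
  have "walk f x = 0" for x
  proof -
    have "walk f x = walk (\<lambda>_. 0) x" by (intro walk_cong) (rule wdot_self_eq_0_imp[OF f])
    then show ?thesis by (simp add: walk_def)
  qed
  then show ?thesis unfolding walk_form_def f by (simp add: wdot_def)
qed

lemma walk_form_min_imp_eigen:
  assumes nonneg: "\<And>g. 0 \<le> walk_form c g g" and f: "walk_form c f f \<le> 0" and x: "x \<in> V"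
  shows "walk (walk f) x = c * f x"
proof -
  (* f minimises the form, so its first variation in the direction of indicator {x} vanishes *)
  have "0 \<le> 2 * t * walk_form c f (indicator {x}) + t\<^sup>2 * walk_form c (indicator {x}) (indicator {x})"
    for t
    using nonneg[of "\<lambda>y. f y + t * indicator {x} y"] nonneg[of f] f
    unfolding walk_form_add_scaled by linarith
  then have "walk_form c f (indicator {x}) = 0"
    by (rule linear_coeff_zero_if_quadratic_nonneg)
  then show ?thesis using dg_pos[OF x] by (simp add: walk_form_indicator_right[OF x])
qed

lemma indefinite_if_not_eigen:
  assumes f: "walk_form (1/4) f f \<le> 0" and x: "x \<in> V" and ne: "walk (walk f) x \<noteq> f x / 4"
  shows "\<exists>g. walk_form (1/4) g g < 0"
proof (rule ccontr)
  assume "\<nexists>g. walk_form (1/4) g g < 0"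
  then have "walk (walk f) x = 1/4 * f x"
    using walk_form_min_imp_eigen[OF _ f x] by (meson not_le)
  then show False using ne by simp
qed

subsection \<open>Eigenvalues of the normalized Laplacian\<close>

lemma eigenvalue_if_walk_eigen:
  assumes "\<And>x. x \<in> V \<Longrightarrow> walk f x = t * f x" and "\<exists>x\<in>V. f x \<noteq> 0"
  shows "1 - t \<in> laplacian_eigenvalues V E"
  unfolding laplacian_eigenvalues_def using assms
  by (intro CollectI exI[of _ f]) (auto simp: norm_laplacian_eq algebra_simps)

lemma eigenvalue_if_walk_sq_eigen:
  assumes eig: "\<And>x. x \<in> V \<Longrightarrow> walk (walk f) x = s\<^sup>2 * f x" and nz: "\<exists>x\<in>V. f x \<noteq> 0"
  shows "1 - s \<in> laplacian_eigenvalues V E \<or> 1 + s \<in> laplacian_eigenvalues V E"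
proof (cases "\<exists>x\<in>V. walk f x + s * f x \<noteq> 0")
  case True
  have "walk (\<lambda>y. walk f y + s * f y) x = s * (walk f x + s * f x)" if "x \<in> V" for x
    unfolding walk_add_scaled eig[OF that] by (simp add: algebra_simps power2_eq_square)
  then show ?thesis using eigenvalue_if_walk_eigen True by blast
next
  case False
  then have "walk f x = (- s) * f x" if "x \<in> V" for x
    using that by (simp add: eq_neg_iff_add_eq_0)
  then show ?thesis using eigenvalue_if_walk_eigen[of f "- s"] nz by simp
qed

definition wnormalize :: "('a \<Rightarrow> real) \<Rightarrow> 'a \<Rightarrow> real" where
  "wnormalize f y = (if y \<in> V then f y / sqrt (wdot f f) else 0)"

lemma walk_wnormalize: "walk (wnormalize f) x = 1 / sqrt (wdot f f) * walk f x"
proof -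
  have "walk (wnormalize f) x = walk (\<lambda>y. 1 / sqrt (wdot f f) * f y) x"
    by (intro walk_cong) (simp add: wnormalize_def)
  then show ?thesis by (simp only: walk_scaled)
qed

lemma wdot_wnormalize:
  "wdot (wnormalize f) (wnormalize f) = (1 / sqrt (wdot f f))\<^sup>2 * wdot f f"
proof -
  have "wdot (wnormalize f) (wnormalize f)
      = wdot (\<lambda>y. 1 / sqrt (wdot f f) * f y) (\<lambda>y. 1 / sqrt (wdot f f) * f y)"
    by (intro wdot_cong) (simp_all add: wnormalize_def)
  then show ?thesis by (simp only: wdot_scaled_left wdot_scaled_right power2_eq_square mult.assoc)
qed

lemma wnormalize_props:
  assumes pos: "0 < wdot f f"
  shows "wdot (wnormalize f) (wnormalize f) = 1"
    and "walk_form c (wnormalize f) (wnormalize f) = walk_form c f f / wdot f f"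
    and "\<bar>wnormalize f x\<bar> \<le> 1"
proof -
  show unit: "wdot (wnormalize f) (wnormalize f) = 1"
    using pos by (simp add: wdot_wnormalize power_divide)
  have "wdot (walk (wnormalize f)) (walk (wnormalize f))
      = (1 / sqrt (wdot f f))\<^sup>2 * wdot (walk f) (walk f)"
    unfolding walk_wnormalize wdot_scaled_left wdot_scaled_right by (simp add: power2_eq_square)
  then show "walk_form c (wnormalize f) (wnormalize f) = walk_form c f f / wdot f f"
    unfolding walk_form_def unit using pos by (simp add: power_divide field_simps)
  show "\<bar>wnormalize f x\<bar> \<le> 1"
  proof (cases "x \<in> V")
    case True
    then have "(wnormalize f x)\<^sup>2 \<le> dg x * (wnormalize f x)\<^sup>2"
      using dg_ge_1 mult_right_mono[of 1 "dg x" "(wnormalize f x)\<^sup>2"] by simp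
    also have "\<dots> \<le> 1" using dg_mult_sq_le_wdot[OF True, of "wnormalize f"] unit by linarith
    finally show ?thesis by (simp add: abs_square_le_1)
  qed (simp add: wnormalize_def)
qed

lemma walk_form_attains_min_ratio:
  assumes "0 < wdot g0 g0"
  obtains f where "wdot f f = 1" "\<And>g. walk_form c f f * wdot g g \<le> walk_form c g g"
proof -
  define K where "K = {g::'a \<Rightarrow> real. \<forall>x. g x \<in> (if x \<in> V then {-1..1} else {0})}
    \<inter> {g. wdot g g = 1}"
  have "compact K" unfolding K_def wdot_def
    by (intro compact_Int_closed compact_box_functions closed_Collect_eq continuous_intros)
  moreover have "continuous_on K (\<lambda>g. walk_form c g g)"
    unfolding walk_form_def walk_def wdot_def
    by (intro continuous_intros) (auto dest: dg_pos)
  moreover have normalized_in_K: "wnormalize g \<in> K" if "0 < wdot g g" for g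
  proof -
    have "wnormalize g x \<in> (if x \<in> V then {-1..1} else {0})" for x
      using wnormalize_props(3)[OF that, of x] by (auto simp: abs_le_iff wnormalize_def)
    then show ?thesis unfolding K_def using wnormalize_props(1)[OF that] by simp
  qed
  ultimately obtain f where f: "f \<in> K" and min: "\<And>g. g \<in> K \<Longrightarrow> walk_form c f f \<le> walk_form c g g"
    using continuous_attains_inf[of K "\<lambda>g. walk_form c g g"] assms by blast
  have "walk_form c f f * wdot g g \<le> walk_form c g g" for g
  proof (cases "wdot g g = 0")
    case True
    then show ?thesis by (simp add: walk_form_eq_0_if_wdot_self_eq_0)
  next
    case False
    then have pos: "0 < wdot g g" using wdot_self_nonneg[of g] by simp
    have "walk_form c f f \<le> walk_form c g g / wdot g g"
      using min[OF normalized_in_K[OF pos]] wnormalize_props(2)[OF pos] by simp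
    then show ?thesis using pos by (simp add: pos_le_divide_eq)
  qed
  moreover have "wdot f f = 1" using f unfolding K_def by simp
  ultimately show ?thesis using that by blast
qed

lemma eigenvalue_near_1_if_indefinite:
  assumes "walk_form (1/4) g g < 0"
  obtains \<mu> where "\<mu> \<in> laplacian_eigenvalues V E" "\<bar>1 - \<mu>\<bar> < 1/2"
proof -
  have "0 < wdot g g"
    using assms wdot_self_nonneg[of "walk g"] wdot_self_nonneg[of g]
    unfolding walk_form_def by linarith
  then obtain f where unit: "wdot f f = 1"
    and min: "\<And>u. walk_form (1/4) f f * wdot u u \<le> walk_form (1/4) u u"
    using walk_form_attains_min_ratio[where c = "1/4"] by blast
  define m where "m = walk_form (1/4) f f"
  have "m < 0" using min[of g] assms \<open>0 < wdot g g\<close> unfolding m_def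
    by (smt (verit) mult_nonneg_nonneg)
  define c where "c = 1/4 + m"
  have shift: "walk_form c u u = walk_form (1/4) u u - m * wdot u u" for u
    unfolding walk_form_def c_def by (simp add: algebra_simps)
  have nonneg: "0 \<le> walk_form c u u" for u
    using min[of u] unfolding shift m_def by simp
  have f0: "walk_form c f f = 0" unfolding shift unit m_def by simp
  have "0 \<le> c"
    using f0 unit wdot_self_nonneg[of "walk f"] unfolding walk_form_def by simp
  then have s: "(sqrt c)\<^sup>2 = c" "0 \<le> sqrt c" "sqrt c < 1/2"
    using \<open>m < 0\<close> real_sqrt_less_mono[of c "1/4"] by (auto simp: c_def real_sqrt_divide)
  have "walk (walk f) x = (sqrt c)\<^sup>2 * f x" if "x \<in> V" for x
    using walk_form_min_imp_eigen[OF nonneg _ that] f0 s(1) by simp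
  moreover have "\<exists>x\<in>V. f x \<noteq> 0"
  proof (rule ccontr)
    assume "\<not> (\<exists>x\<in>V. f x \<noteq> 0)"
    then have "wdot f f = 0" unfolding wdot_def by simp
    then show False using unit by simp
  qed
  ultimately have "1 - sqrt c \<in> laplacian_eigenvalues V E \<or> 1 + sqrt c \<in> laplacian_eigenvalues V E"
    by (rule eigenvalue_if_walk_sq_eigen)
  then show ?thesis using that s by force
qed

lemma bessel_inequality:
  assumes "finite S"
    and orthonormal: "\<And>i j. i \<in> S \<Longrightarrow> j \<in> S \<Longrightarrow> wdot (e i) (e j) = (if i = j then 1 else 0)"
  shows "(\<Sum>i\<in>S. (wdot h (e i))\<^sup>2) \<le> wdot h h"
proof -
  define a where "a i = wdot h (e i)" for i
  define p where "p y = (\<Sum>i\<in>S. a i * e i y)" for y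
  have p_e: "wdot p (e j) = a j" if "j \<in> S" for j
  proof -
    have "wdot p (e j) = (\<Sum>i\<in>S. if i = j then a j else 0)"
      unfolding p_def wdot_sum_left using that by (intro sum.cong) (auto simp: orthonormal)
    then show ?thesis using assms(1) that by simp
  qed
  have "wdot h p = wdot p h" by (rule wdot_comm)
  also have "\<dots> = (\<Sum>i\<in>S. a i * wdot (e i) h)" unfolding p_def by (rule wdot_sum_left)
  also have "\<dots> = (\<Sum>i\<in>S. (a i)\<^sup>2)"
    by (intro sum.cong refl) (simp add: a_def wdot_comm[of "e _" h] power2_eq_square)
  finally have hp: "wdot h p = (\<Sum>i\<in>S. (a i)\<^sup>2)" .
  have "wdot p p = (\<Sum>i\<in>S. a i * wdot (e i) p)" by (simp only: p_def[abs_def] wdot_sum_left)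
  also have "\<dots> = (\<Sum>i\<in>S. (a i)\<^sup>2)"
    by (intro sum.cong refl) (simp add: wdot_comm[of "e _" p] p_e power2_eq_square)
  finally have pp: "wdot p p = (\<Sum>i\<in>S. (a i)\<^sup>2)" .
  have "wdot (\<lambda>y. h y - p y) (\<lambda>y. h y - p y) = wdot h h - 2 * wdot h p + wdot p p"
    unfolding wdot_def by (simp add: algebra_simps sum_subtractf sum.distrib sum_distrib_left)
  then show ?thesis using wdot_self_nonneg[of "\<lambda>y. h y - p y"] hp pp by (simp add: a_def)
qed

lemma eigenvectors_orthogonal:
  assumes "s \<noteq> t" "\<And>x. x \<in> V \<Longrightarrow> walk f x = s * f x" "\<And>x. x \<in> V \<Longrightarrow> walk g x = t * g x"
  shows "wdot f g = 0"
proof -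
  have "wdot f (walk g) = t * wdot f g" and "wdot (walk f) g = s * wdot f g"
    using wdot_cong[of f f "walk g" "\<lambda>y. t * g y"] wdot_cong[of "walk f" "\<lambda>y. s * f y" g g]
    by (simp_all add: assms(2,3) wdot_scaled_left wdot_scaled_right)
  then show ?thesis using walk_self_adjoint[of f g] assms(1) by simp
qed

lemma unit_eigenvector:
  assumes "\<mu> \<in> laplacian_eigenvalues V E"
  obtains e where "wdot e e = 1" "\<And>x. x \<in> V \<Longrightarrow> walk e x = (1 - \<mu>) * e x"
proof -
  obtain f v where v: "v \<in> V" "f v \<noteq> 0"
    and eig: "\<And>x. x \<in> V \<Longrightarrow> norm_laplacian V E f x = \<mu> * f x"
    using assms unfolding laplacian_eigenvalues_def by blast
  have walk_f: "walk f x = (1 - \<mu>) * f x" if "x \<in> V" for x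
    using eig[OF that] unfolding norm_laplacian_eq by (simp add: algebra_simps)
  have "0 < dg v * (f v)\<^sup>2" using v dg_pos by simp
  then have pos: "0 < wdot f f" using dg_mult_sq_le_wdot[OF v(1), of f] by linarith
  have "walk (wnormalize f) x = (1 - \<mu>) * wnormalize f x" if "x \<in> V" for x
    using that by (simp add: walk_wnormalize walk_f wnormalize_def)
  then show ?thesis using that wnormalize_props(1)[OF pos] by blast
qed

lemma card_eigenvalues_le:
  assumes "finite S" "S \<subseteq> laplacian_eigenvalues V E"
  shows "card S \<le> card V"
proof -
  have "\<forall>\<mu>\<in>S. \<exists>e. wdot e e = 1 \<and> (\<forall>x\<in>V. walk e x = (1 - \<mu>) * e x)"
  proof
    fix \<mu> assume "\<mu> \<in> S"
    then obtain e where "wdot e e = 1" "\<And>x. x \<in> V \<Longrightarrow> walk e x = (1 - \<mu>) * e x"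
      using unit_eigenvector assms(2) by blast
    then show "\<exists>e. wdot e e = 1 \<and> (\<forall>x\<in>V. walk e x = (1 - \<mu>) * e x)" by blast
  qed
  then obtain e where e: "\<forall>\<mu>\<in>S. wdot (e \<mu>) (e \<mu>) = 1 \<and> (\<forall>x\<in>V. walk (e \<mu>) x = (1 - \<mu>) * e \<mu> x)"
    by (rule bchoice[THEN exE])
  have orthonormal: "wdot (e \<mu>) (e \<nu>) = (if \<mu> = \<nu> then 1 else 0)" if "\<mu> \<in> S" "\<nu> \<in> S" for \<mu> \<nu>
  proof (cases "\<mu> = \<nu>")
    case False
    then show ?thesis using e that by (simp add: eigenvectors_orthogonal[of "1 - \<mu>" "1 - \<nu>"])
  qed (use e that in simp)
  have "(\<Sum>\<mu>\<in>S. dg x * (e \<mu> x)\<^sup>2) \<le> 1" if x: "x \<in> V" for x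
  proof -
    have "wdot (indicator {x}) (e \<mu>) = dg x * e \<mu> x" for \<mu>
      by (subst wdot_comm) (rule wdot_indicator[OF x])
    moreover have "wdot (indicator {x}) (indicator {x}) = dg x"
      using wdot_indicator[OF x, of "indicator {x}"] by simp
    ultimately have "(\<Sum>\<mu>\<in>S. (dg x * e \<mu> x)\<^sup>2) \<le> dg x"
      using bessel_inequality[OF assms(1) orthonormal, of "indicator {x}"] by simp
    also have "(\<Sum>\<mu>\<in>S. (dg x * e \<mu> x)\<^sup>2) = dg x * (\<Sum>\<mu>\<in>S. dg x * (e \<mu> x)\<^sup>2)"
      by (simp add: sum_distrib_left power2_eq_square mult.assoc mult.left_commute)
    finally show ?thesis using dg_pos[OF x] by simp
  qed
  then have "(\<Sum>x\<in>V. \<Sum>\<mu>\<in>S. dg x * (e \<mu> x)\<^sup>2) \<le> (\<Sum>x\<in>V. 1)"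
    by (intro sum_mono)
  also have "(\<Sum>x\<in>V. \<Sum>\<mu>\<in>S. dg x * (e \<mu> x)\<^sup>2) = (\<Sum>\<mu>\<in>S. wdot (e \<mu>) (e \<mu>))"
    unfolding wdot_def by (subst sum.swap) (simp add: power2_eq_square mult.assoc)
  also have "\<dots> = real (card S)" using e by simp
  finally show ?thesis by simp
qed

lemma finite_eigenvalues: "finite (laplacian_eigenvalues V E)"
proof (rule ccontr)
  assume "infinite (laplacian_eigenvalues V E)"
  then obtain S where "finite S" "card S = Suc (card V)" "S \<subseteq> laplacian_eigenvalues V E"
    using infinite_arbitrarily_large by blast
  then show False using card_eigenvalues_le by fastforce
qed

lemma eps_gap_lt_half_if_indefinite:
  assumes "walk_form (1/4) g g < 0"
  shows "eps_gap V E < 1/2"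
proof -
  obtain \<mu> where "\<mu> \<in> laplacian_eigenvalues V E" "\<bar>1 - \<mu>\<bar> < 1/2"
    using eigenvalue_near_1_if_indefinite[OF assms] .
  moreover from this(1) have "eps_gap V E \<le> \<bar>1 - \<mu>\<bar>"
    unfolding eps_gap_def using finite_eigenvalues by (intro Min_le) auto
  ultimately show ?thesis by simp
qed

subsection \<open>Test functions\<close>

lemma walk_form_indicator:
  assumes "v \<in> V"
  shows "walk_form c (indicator {v}) (indicator {v}) = (\<Sum>y\<in>nbhd V E v. 1 / dg y) - c * dg v"
proof -
  have "wdot (walk (indicator {v})) (walk (indicator {v})) = (\<Sum>y\<in>V. indicator (nbhd V E v) y * (1 / dg y))"
    unfolding wdot_def walk_indicator using dg_pos
    by (intro sum.cong refl) (simp add: indicator_def power2_eq_square)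
  also have "\<dots> = (\<Sum>y\<in>nbhd V E v. 1 / dg y)" by (rule sum_indicator_mult_subset[OF finite_V nbhd_subset])
  finally show ?thesis using assms unfolding walk_form_def by (simp add: wdot_indicator)
qed

lemma walk_form_indicator_diff:
  assumes "p \<in> V" "q \<in> V" "p \<noteq> q"
  defines "f \<equiv> \<lambda>y. indicator {p} y - indicator {q} y"
  shows "walk_form c f f = (\<Sum>y\<in>nbhd V E p - nbhd V E q. 1 / dg y)
      + (\<Sum>y\<in>nbhd V E q - nbhd V E p. 1 / dg y) - c * (dg p + dg q)"
proof -
  have "dg y * walk f y * walk f y = indicator (nbhd V E p - nbhd V E q) y * (1 / dg y)
      + indicator (nbhd V E q - nbhd V E p) y * (1 / dg y)" if "y \<in> V" for y
    unfolding f_def walk_diff walk_indicator using dg_pos[OF that]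
    by (simp add: indicator_def power2_eq_square)
  then have "wdot (walk f) (walk f) = (\<Sum>y\<in>V. indicator (nbhd V E p - nbhd V E q) y * (1 / dg y))
      + (\<Sum>y\<in>V. indicator (nbhd V E q - nbhd V E p) y * (1 / dg y))"
    unfolding wdot_def sum.distrib[symmetric] by (intro sum.cong) auto
  also have "\<dots> = (\<Sum>y\<in>nbhd V E p - nbhd V E q. 1 / dg y) + (\<Sum>y\<in>nbhd V E q - nbhd V E p. 1 / dg y)"
    using nbhd_subset by (intro arg_cong2[where f = "(+)"] sum_indicator_mult_subset finite_V) blast+
  finally have "wdot (walk f) (walk f) = (\<Sum>y\<in>nbhd V E p - nbhd V E q. 1 / dg y)
      + (\<Sum>y\<in>nbhd V E q - nbhd V E p. 1 / dg y)" .
  moreover have "wdot f f = dg p + dg q"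
  proof -
    have "dg y * f y * f y = (if y = p then dg p else 0) + (if y = q then dg q else 0)" for y
      using assms(3) by (simp add: f_def indicator_def)
    then show ?thesis unfolding wdot_def using assms(1,2) finite_V by (simp add: sum.distrib)
  qed
  ultimately show ?thesis unfolding walk_form_def by simp
qed

lemma sum_inverse_dg_nbhd_diff_le:
  assumes "z \<in> nbhd V E p" "z \<in> A" and large: "\<And>y. y \<in> nbhd V E p - A \<Longrightarrow> 3 \<le> dg y"
  shows "(\<Sum>y\<in>nbhd V E p - A. 1 / dg y) \<le> (dg p - 1) / 3"
proof -
  have "(\<Sum>y\<in>nbhd V E p - A. 1 / dg y) \<le> (\<Sum>y\<in>nbhd V E p - A. 1 / 3)"
  proof (rule sum_mono)
    fix y assume "y \<in> nbhd V E p - A"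
    then show "1 / dg y \<le> 1 / 3" using large[of y] by (intro divide_left_mono) auto
  qed
  also have "\<dots> = real (card (nbhd V E p - A)) / 3" by simp
  also have "\<dots> \<le> (dg p - 1) / 3"
  proof -
    have "card (nbhd V E p - A) \<le> card (nbhd V E p - {z})"
      using assms(2) finite_nbhd by (intro card_mono) auto
    also have "\<dots> = card (nbhd V E p) - 1" using assms(1) finite_nbhd by simp
    finally have "real (card (nbhd V E p - A)) \<le> real (card (nbhd V E p) - 1)" by linarith
    moreover have "0 < card (nbhd V E p)" using assms(1) finite_nbhd card_gt_0_iff by blast
    ultimately show ?thesis using card_nbhd[of p] by (simp add: of_nat_diff)
  qed
  finally show ?thesis .
qed

lemma walk_form_indicator_diff_le:
  assumes "p \<in> V" "q \<in> V" "p \<noteq> q" "z \<in> nbhd V E p" "z \<in> nbhd V E q"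
    and large: "\<And>y. y \<in> nbhd V E p \<union> nbhd V E q \<Longrightarrow> y \<noteq> z \<Longrightarrow> 3 \<le> dg y"
  shows "walk_form (1/4) (\<lambda>y. indicator {p} y - indicator {q} y) (\<lambda>y. indicator {p} y - indicator {q} y)
      \<le> (dg p - 1) / 3 + (dg q - 1) / 3 - (dg p + dg q) / 4"
proof -
  have "(\<Sum>y\<in>nbhd V E p - nbhd V E q. 1 / dg y) \<le> (dg p - 1) / 3"
    by (rule sum_inverse_dg_nbhd_diff_le[OF assms(4,5)]) (use assms(5) large in blast)
  moreover have "(\<Sum>y\<in>nbhd V E q - nbhd V E p. 1 / dg y) \<le> (dg q - 1) / 3"
    by (rule sum_inverse_dg_nbhd_diff_le[OF assms(5,4)]) (use assms(4) large in blast)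
  ultimately show ?thesis unfolding walk_form_indicator_diff[OF assms(1-3)] by linarith
qed

lemma indefinite_if_deg2_pair_share_neighbour:
  assumes "v \<in> V" "w \<in> V" "v \<noteq> w" "dg v = 2" "dg w = 2" "z \<in> nbhd V E v" "z \<in> nbhd V E w"
    and "\<And>y. y \<in> nbhd V E v \<union> nbhd V E w \<Longrightarrow> y \<noteq> z \<Longrightarrow> 3 \<le> dg y"
  shows "\<exists>g. walk_form (1/4) g g < 0"
proof -
  define f :: "'a \<Rightarrow> real" where "f y = indicator {v} y - indicator {w} y" for y
  have "walk_form (1/4) f f \<le> (dg v - 1) / 3 + (dg w - 1) / 3 - (dg v + dg w) / 4"
    unfolding f_def[abs_def] by (rule walk_form_indicator_diff_le[OF assms(1-3,6,7)]) (rule assms(8))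
  then have "walk_form (1/4) f f < 0" using assms(4,5) by simp
  then show ?thesis by blast
qed

lemma indefinite_if_deg3_pair:
  assumes a: "a \<in> V" and "b \<in> V" "a \<noteq> b" "v \<in> nbhd V E a" "v \<in> nbhd V E b"
    and large: "\<And>y. y \<in> nbhd V E a \<union> nbhd V E b \<Longrightarrow> y \<noteq> v \<Longrightarrow> 3 \<le> dg y"
    and deg_a: "dg a = 3" and "dg a + dg b \<le> 8"
  shows "\<exists>g. walk_form (1/4) g g < 0"
proof -
  define f :: "'a \<Rightarrow> real" where "f y = indicator {a} y - indicator {b} y" for y
  have "walk_form (1/4) f f \<le> (dg a - 1) / 3 + (dg b - 1) / 3 - (dg a + dg b) / 4"
    unfolding f_def[abs_def] by (rule walk_form_indicator_diff_le[OF assms(1-5)]) (rule large)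
  then have "walk_form (1/4) f f \<le> 0" using assms(8) by (simp add: field_simps)
  moreover have "walk (walk f) a \<noteq> f a / 4"
  proof -
    have "(\<Sum>y\<in>nbhd V E a. walk f y) = (\<Sum>y\<in>nbhd V E a. indicator (nbhd V E a - nbhd V E b) y * (1 / dg y))"
      unfolding f_def[abs_def] walk_diff walk_indicator by (intro sum.cong refl) (simp add: indicator_def)
    also have "\<dots> = (\<Sum>y\<in>nbhd V E a - nbhd V E b. 1 / dg y)"
      by (rule sum_indicator_mult_subset[OF finite_nbhd Diff_subset])
    also have "\<dots> \<le> 2 / 3"
      using sum_inverse_dg_nbhd_diff_le[of v a "nbhd V E b"] assms(4,5) large deg_a by force
    finally have "walk (walk f) a \<le> 2 / 9" using dg_mult_walk[OF a, of "walk f"] deg_a by simp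
    moreover have "f a = 1" using assms(3) by (simp add: f_def)
    ultimately show ?thesis by simp
  qed
  ultimately show ?thesis using indefinite_if_not_eigen a by blast
qed

lemma indefinite_if_light_neighbours:
  assumes v: "v \<in> V" and nbhd_v: "nbhd V E v = {a, b}" "a \<noteq> b"
    and light: "1 / dg a + 1 / dg b \<le> 1 / 2"
    and x: "x \<in> nbhd V E a" "x \<noteq> v"
  shows "\<exists>g. walk_form (1/4) g g < 0"
proof -
  have "dg v = 2" using card_nbhd[of v] nbhd_v by simp
  then have "walk_form (1/4) (indicator {v}) (indicator {v}) \<le> 0"
    using light nbhd_v by (simp add: walk_form_indicator[OF v])
  moreover have "walk (walk (indicator {v})) x \<noteq> indicator {v} x / 4"
  proof -
    have a: "a \<in> nbhd V E v" "a \<in> V" using nbhd_v nbhd_subset by auto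
    have "0 < walk (indicator {v}) a"
      using a dg_pos[of a] by (simp add: walk_indicator)
    also have "\<dots> \<le> (\<Sum>y\<in>nbhd V E x. walk (indicator {v}) y)"
      using x a finite_nbhd
      by (intro member_le_sum) (auto simp: walk_indicator mem_nbhd_iff edge_sym dg_nonneg)
    also have "\<dots> = dg x * walk (walk (indicator {v})) x"
      using x nbhd_subset by (simp add: dg_mult_walk subset_iff)
    finally show ?thesis using x by auto
  qed
  ultimately show ?thesis using indefinite_if_not_eigen x nbhd_subset by blast
qed

lemma indefinite_at_deg2_vertex:
  assumes v: "v \<in> V" and nbhd_v: "nbhd V E v = {a, b}" "a \<noteq> b"
    and "3 \<le> dg a" "3 \<le> dg b"
    and large: "\<And>y. y \<in> nbhd V E a \<union> nbhd V E b \<Longrightarrow> y \<noteq> v \<Longrightarrow> 3 \<le> dg y"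
  shows "\<exists>g. walk_form (1/4) g g < 0"
proof (cases "1 / dg a + 1 / dg b \<le> 1 / 2")
  case True
  have "3 \<le> real (card (nbhd V E a))" using card_nbhd[of a] \<open>3 \<le> dg a\<close> by simp
  then have "\<not> nbhd V E a \<subseteq> {v}" using card_mono[of "{v}" "nbhd V E a"] by auto
  then obtain x where "x \<in> nbhd V E a" "x \<noteq> v" by blast
  then show ?thesis by (rule indefinite_if_light_neighbours[OF v nbhd_v True])
next
  case False
  have "a \<in> nbhd V E v" "b \<in> nbhd V E v" using nbhd_v(1) by auto
  then have "E v a" "E v b" by (simp_all add: mem_nbhd_iff)
  then have "E a v" "E b v" using edge_sym by blast+
  then have ab: "a \<in> V" "b \<in> V" and v_nbhd: "v \<in> nbhd V E a" "v \<in> nbhd V E b"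
    using edge_in_V by (auto simp: mem_nbhd_iff)
  have deg_ab: "3 \<le> deg V E a" "3 \<le> deg V E b" using assms(4,5) by (simp_all add: dg_def)
  have "1 / real (deg V E a) + 1 / real (deg V E b) > 1 / 2" using False by (simp add: dg_def)
  then consider "deg V E a = 3" "deg V E b \<le> 5" | "deg V E b = 3" "deg V E a \<le> 5"
    using inverse_sum_gt_half_cases[OF deg_ab] by blast
  then show ?thesis
  proof cases
    case 1
    then have "dg a = 3" "dg a + dg b \<le> 8" by (simp_all add: dg_def)
    with large show ?thesis by (intro indefinite_if_deg3_pair[OF ab nbhd_v(2) v_nbhd])
  next
    case 2
    then have "dg b = 3" "dg b + dg a \<le> 8" by (simp_all add: dg_def)
    with large show ?thesis
      by (intro indefinite_if_deg3_pair[OF ab(2,1) nbhd_v(2)[symmetric] v_nbhd(2,1)]) auto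
  qed
qed

lemma indefinite_if_no_adjacent_deg2:
  assumes deg_ge_2: "\<And>y. y \<in> V \<Longrightarrow> 2 \<le> deg V E y"
    and no_adjacent: "\<And>u w. E u w \<Longrightarrow> deg V E u = 2 \<Longrightarrow> deg V E w \<noteq> 2"
    and v: "v \<in> V" "deg V E v = 2"
  shows "\<exists>g. walk_form (1/4) g g < 0"
proof -
  have large_if_not_2: "3 \<le> dg y" if "y \<in> V" "deg V E y \<noteq> 2" for y
    using deg_ge_2[OF that(1)] that(2) unfolding dg_def by simp
  have nbhd_large: "3 \<le> dg y" if "y \<in> nbhd V E u" "deg V E u = 2" for u y
    using that no_adjacent[of u y] large_if_not_2[of y] edge_in_V[of u y] by (auto simp: mem_nbhd_iff)
  have "card (nbhd V E v) = 2" using v(2) unfolding deg_def .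
  then obtain a b where ab: "a \<noteq> b" "nbhd V E v = {a, b}" by (auto simp: card_2_iff)
  have "dg v = 2" using v(2) unfolding dg_def by simp
  show ?thesis
  proof (cases "\<exists>w\<in>V. w \<noteq> v \<and> deg V E w = 2 \<and> (E w a \<or> E w b)")
    case True
    then obtain w z where w: "w \<in> V" "w \<noteq> v" "deg V E w = 2"
      and z: "z \<in> nbhd V E v" "z \<in> nbhd V E w"
      using ab(2) by (auto simp: mem_nbhd_iff)
    have "dg w = 2" using w(3) unfolding dg_def by simp
    then show ?thesis
      using indefinite_if_deg2_pair_share_neighbour[OF v(1) w(1) w(2)[symmetric] \<open>dg v = 2\<close> _ z]
        nbhd_large v(2) w(3) by blast
  next
    case False
    have "y \<noteq> v \<Longrightarrow> deg V E y \<noteq> 2" if "y \<in> nbhd V E a \<union> nbhd V E b" for y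
    proof -
      have "E a y \<or> E b y" using that by (simp add: mem_nbhd_iff)
      then have "y \<in> V" "E y a \<or> E y b" using edge_in_V edge_sym by blast+
      then show "y \<noteq> v \<Longrightarrow> deg V E y \<noteq> 2" using False by blast
    qed
    then have "3 \<le> dg y" if "y \<in> nbhd V E a \<union> nbhd V E b" "y \<noteq> v" for y
      using that large_if_not_2 nbhd_subset by blast
    moreover have "3 \<le> dg a" "3 \<le> dg b" using nbhd_large[of _ v] ab(2) v(2) by auto
    ultimately show ?thesis using indefinite_at_deg2_vertex[OF v(1) ab(2,1)] by blast
  qed
qed

end

theorem mainTheorem9:
  fixes V :: "'a set" and E :: "'a \<Rightarrow> 'a \<Rightarrow> bool"
  assumes "simple_graph V E"
    and "connected_graph V E"
    and "card V \<ge> 3"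
    and "min_degree V E = 2"
    and "eps_gap V E = 1 / 2"
  shows "\<exists>u\<in>V. \<exists>v\<in>V. E u v \<and> deg V E u = 2 \<and> deg V E v = 2"
proof (rule ccontr)
  assume no_pair: "\<not> ?thesis"
  have fin: "finite V" using assms(1) unfolding simple_graph_def by blast
  then have deg_ge_2: "2 \<le> deg V E y" if "y \<in> V" for y
    using min_degree_le[OF _ that] assms(4) by metis
  have "V \<noteq> {}" using assms(3) by auto
  then obtain v where v: "v \<in> V" "deg V E v = 2"
    using min_degree_attained[OF fin, of E] assms(4) by auto
  interpret no_isolated_graph V E
    by (rule no_isolated_graph.intro[OF assms(1)]) (use deg_ge_2 in fastforce)
  have "\<exists>g. walk_form (1/4) g g < 0"
  proof (rule indefinite_if_no_adjacent_deg2[OF deg_ge_2 _ v])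
    fix u w assume "E u w" "deg V E u = 2"
    then show "deg V E w \<noteq> 2" using no_pair edge_in_V[OF \<open>E u w\<close>] by blast
  qed
  then show False using eps_gap_lt_half_if_indefinite assms(5) by force
qed

end
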